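(* Let $1<q<n+1$ and $\lambda_i=\frac{i+\min\{i,q-1\}}{n+q-1}$ for $i=1,\dots,n-1$. Let $\mu$ be a finite Borel measure on $S^{n-1}$ satisfying $\frac{\mu(\xi_i\cap S^{n-1})}{|\mu|}<\lambda_i$ for every $i$-dimensional linear subspace $\xi_i\subset\mathbb R^n$ and every $i=1,\dots,n-1$, and let $\overline\mu_m$ be constructed as in the context. Then there exist $\widetilde\lambda_i\in(0,\lambda_i)$ ($i=1,\dots,n-1$), $N_0>0$ and $\eta_0\in(0,1)$ such that for all $m>N_0$, $$\frac{\overline\mu_m\big(\mathfrak N_{\eta_0}(\xi_i\cap S^{n-1})\big)}{|\mu|}<\widetilde\lambda_i$$ for every $i$-dimensional subspace $\xi_i\subset\mathbb R^n$ and every $i=1,\dots,n-1$.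
   Context: $|\nu|$ denotes total mass. For $\omega\subset S^{n-1}$ and $\eta>0$, $\mathfrak N_\eta(\omega)=\{v\in S^{n-1}: |v-u|<\eta\text{ for some }u\in\omega\}$. Construction: for each positive integer $m$, $U_{1,m},\dots,U_{\mathcal N_m,m}$ is a partition of $S^{n-1}$ into Borel sets of diameter less than $1/m$ with nonempty interior relative to $S^{n-1}$, $v_{i,m}\in U_{i,m}$ are in general position in dimension $n$, $\mu_m=\sum_{i=1}^{\mathcal N_m}(\mu(U_{i,m})+\mathcal N_m^{-2})\delta_{v_{i,m}}$ and $\overline\mu_m=\frac{|\mu|}{|\mu_m|}\mu_m$. *)

theory Defs
  imports "HOL-Analysis.Analysis"
begin

text \<open>The unit sphere S^{n-1} is sphere 0 1 in a Euclidean space of dimension n.\<close>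

definition lam :: "nat \<Rightarrow> real \<Rightarrow> nat \<Rightarrow> real" where
  "lam n q i = (real i + min (real i) (q - 1)) / (real n + q - 1)"

definition nbhd :: "real \<Rightarrow> 'a::euclidean_space set \<Rightarrow> 'a set" where
  "nbhd \<eta> \<omega> = {w \<in> sphere 0 1. \<exists>u\<in>\<omega>. norm (w - u) < \<eta>}"

definition general_position :: "nat \<Rightarrow> nat set \<Rightarrow> (nat \<Rightarrow> 'a::euclidean_space) \<Rightarrow> bool" where
  "general_position n I v \<longleftrightarrow>
     (\<forall>J \<subseteq> I. card J \<le> n \<longrightarrow> inj_on v J \<and> independent (v ` J))"

definition admissible_partition ::
  "'a::euclidean_space measure \<Rightarrow> nat \<Rightarrow> nat \<Rightarrow> (nat \<Rightarrow> 'a set) \<Rightarrow> (nat \<Rightarrow> 'a) \<Rightarrow> bool" where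
  "admissible_partition \<mu> m N U v \<longleftrightarrow>
     (\<Union>i\<in>{1..N}. U i) = sphere 0 1 \<and>
     (\<forall>i\<in>{1..N}. \<forall>j\<in>{1..N}. i \<noteq> j \<longrightarrow> U i \<inter> U j = {}) \<and>
     (\<forall>i\<in>{1..N}. U i \<in> sets (borel :: 'a measure) \<and> U i \<subseteq> sphere 0 1 \<and>
        diameter (U i) < 1 / real m \<and>
        (\<exists>W. openin (top_of_set (sphere 0 1)) W \<and> W \<noteq> {} \<and> W \<subseteq> U i) \<and>
        v i \<in> U i) \<and>
     general_position DIM('a) {1..N} v"

definition mu_m_mass :: "'a measure \<Rightarrow> nat \<Rightarrow> (nat \<Rightarrow> 'a set) \<Rightarrow> real" where
  "mu_m_mass \<mu> N U = (\<Sum>i\<in>{1..N}. measure \<mu> (U i) + 1 / (real N)^2)"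

text \<open>mu_m(A) for the discrete measure sum_i (mu(U_i) + N^{-2}) delta_{v_i}.\<close>
definition mu_m :: "'a measure \<Rightarrow> nat \<Rightarrow> (nat \<Rightarrow> 'a set) \<Rightarrow> (nat \<Rightarrow> 'a) \<Rightarrow> 'a set \<Rightarrow> real" where
  "mu_m \<mu> N U v A = (\<Sum>i\<in>{1..N}. if v i \<in> A then measure \<mu> (U i) + 1 / (real N)^2 else 0)"

definition mubar_m :: "'a measure \<Rightarrow> nat \<Rightarrow> (nat \<Rightarrow> 'a set) \<Rightarrow> (nat \<Rightarrow> 'a) \<Rightarrow> 'a set \<Rightarrow> real" where
  "mubar_m \<mu> N U v A = measure \<mu> (space \<mu>) / mu_m_mass \<mu> N U * mu_m \<mu> N U v A"

end

(* Write S for the unit sphere and N_eta(A) for the eta-neighbourhood of A within S.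
   The hypotheses mu(xi \<inter> S) < lambda_i |mu| are strict and the i-dimensional subspaces form
   a compact family (via orthonormal frames), so by continuity of mu from above they hold uniformly
   on neighbourhoods: for some eta > 0 and c_i < lambda_i |mu|, mu(N_eta(xi \<inter> S)) <= c_i for
   every i-dimensional xi.
   In the discretization, an atom v_j in N_eta(xi \<inter> S) carries the mass of a piece U_j of
   diameter < 1/m, which lies in N_(eta + 1/m)(xi \<inter> S); the extra masses N_m^(-2) add at most
   1/N_m, and N_m > m because S contains m + 1 points at mutual distance >= 1/m. Normalizing
   only decreases masses, so once 1/m < eta,
   mubar_m(N_eta(xi \<inter> S)) <= mu(N_(2 eta)(xi \<inter> S)) + 1/m, which is eventually below any
   bound strictly between c_i and lambda_i |mu|. *)

theory Submission
  imports Defs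
begin

section \<open>Orthonormal frames and limits of subspaces\<close>

definition orthonormal_frame :: "nat \<Rightarrow> (nat \<Rightarrow> 'a::real_inner) \<Rightarrow> bool" where
  "orthonormal_frame i f \<longleftrightarrow> (\<forall>j<i. \<forall>l<i. f j \<bullet> f l = of_bool (j = l))"

lemma orthonormal_frame_norm: "orthonormal_frame i f \<Longrightarrow> j < i \<Longrightarrow> norm (f j) = 1"
  by (simp add: orthonormal_frame_def norm_eq_1)

lemma orthonormal_frame_inj_on:
  assumes "orthonormal_frame i f"
  shows "inj_on f {..<i}"
proof (rule inj_onI)
  fix j l assume "j \<in> {..<i}" "l \<in> {..<i}" "f j = f l"
  then show "j = l"
    using assms unfolding orthonormal_frame_def by (metis (full_types) lessThan_iff of_bool_eq_iff)
qed

lemma orthonormal_frame_pairwise_orthogonal: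
  "orthonormal_frame i f \<Longrightarrow> pairwise orthogonal (f ` {..<i})"
  by (force simp: orthonormal_frame_def pairwise_def orthogonal_def)

lemma orthonormal_frame_exists:
  fixes \<xi> :: "'a::euclidean_space set"
  assumes "subspace \<xi>" "dim \<xi> = i"
  obtains f where "orthonormal_frame i f" "\<xi> = span (f ` {..<i})"
proof -
  obtain B where B: "pairwise orthogonal B" "\<And>x. x \<in> B \<Longrightarrow> norm x = 1"
      "independent B" "card B = i" "span B = \<xi>"
    using orthonormal_basis_subspace[OF assms(1)] assms(2) by metis
  then obtain f where f: "bij_betw f {..<i} B"
    by (metis independent_imp_finite ex_bij_betw_nat_finite lessThan_atLeast0)
  have "orthonormal_frame i f"
    unfolding orthonormal_frame_def
  proof (intro allI impI)
    fix j l assume "j < i" "l < i"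
    then show "f j \<bullet> f l = of_bool (j = l)"
      using f B(1,2) bij_betw_apply[OF f] bij_betw_imp_inj_on[OF f]
      by (cases "j = l") (auto simp: dot_square_norm pairwise_def orthogonal_def inj_on_def,
          metis lessThan_iff)
  qed
  with that show thesis
    using B(5) bij_betw_imp_surj_on[OF f] by blast
qed

lemma dim_span_orthonormal_frame:
  fixes f :: "nat \<Rightarrow> 'a::euclidean_space"
  assumes "orthonormal_frame i f"
  shows "dim (span (f ` {..<i})) = i"
proof -
  have "independent (f ` {..<i})"
    using assms orthonormal_frame_pairwise_orthogonal orthonormal_frame_norm
    by (intro pairwise_orthogonal_independent) fastforce+
  then show ?thesis
    using card_image[OF orthonormal_frame_inj_on[OF assms]]
    by (simp add: dim_eq_card_independent)
qed

lemma orthonormal_frame_expansion: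
  fixes f :: "nat \<Rightarrow> 'a::euclidean_space"
  assumes "orthonormal_frame i f" "x \<in> span (f ` {..<i})"
  shows "x = (\<Sum>j<i. (x \<bullet> f j) *\<^sub>R f j)"
proof -
  have "x = (\<Sum>b\<in>f ` {..<i}. (x \<bullet> b) *\<^sub>R b)"
    using assms orthonormal_frame_pairwise_orthogonal orthonormal_frame_norm
    by (intro orthonormal_basis_expand[symmetric]) auto
  also have "\<dots> = (\<Sum>j<i. (x \<bullet> f j) *\<^sub>R f j)"
    by (simp add: sum.reindex[OF orthonormal_frame_inj_on[OF assms(1)]])
  finally show ?thesis .
qed

lemma norm_diff_sgn_le:
  fixes x y :: "'a::real_normed_vector"
  assumes "norm x = 1"
  shows "norm (x - sgn y) \<le> 2 * norm (x - y)"
proof (cases "y = 0")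
  case True
  then show ?thesis using assms by simp
next
  case False
  have "y - sgn y = (norm y - 1) *\<^sub>R sgn y"
    using False by (simp add: sgn_div_norm algebra_simps)
  then have "norm (y - sgn y) = \<bar>norm y - norm x\<bar>"
    using False assms by (simp add: norm_sgn)
  also have "\<dots> \<le> norm (x - y)"
    by (metis norm_minus_commute norm_triangle_ineq3)
  finally show ?thesis
    using norm_triangle_ineq[of "x - y" "y - sgn y"] by simp
qed

lemma orthonormal_frame_perturb:
  fixes f g :: "nat \<Rightarrow> 'a::euclidean_space"
  assumes f: "orthonormal_frame i f" and x: "x \<in> span (f ` {..<i})" "norm x = 1"
    and small: "(\<Sum>j<i. norm (f j - g j)) < 1"
  shows "\<exists>w\<in>span (g ` {..<i}) \<inter> sphere 0 1. norm (x - w) \<le> 2 * (\<Sum>j<i. norm (f j - g j))"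
proof -
  define y where "y = (\<Sum>j<i. (x \<bullet> f j) *\<^sub>R g j)"
  have "x - y = (\<Sum>j<i. (x \<bullet> f j) *\<^sub>R (f j - g j))"
    by (subst orthonormal_frame_expansion[OF f x(1)])
      (simp add: y_def sum_subtractf scaleR_diff_right)
  also have "norm \<dots> \<le> (\<Sum>j<i. norm (f j - g j))"
  proof (rule order_trans[OF norm_sum sum_mono])
    fix j assume "j \<in> {..<i}"
    then have "\<bar>x \<bullet> f j\<bar> \<le> 1"
      using Cauchy_Schwarz_ineq2[of x "f j"] orthonormal_frame_norm[OF f] x(2) by simp
    then show "norm ((x \<bullet> f j) *\<^sub>R (f j - g j)) \<le> norm (f j - g j)"
      by (simp add: mult_left_le_one_le)
  qed
  finally have xy: "norm (x - y) \<le> (\<Sum>j<i. norm (f j - g j))" .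
  then have "y \<noteq> 0"
    using small x(2) by auto
  moreover have "y \<in> span (g ` {..<i})"
    unfolding y_def by (intro span_sum span_scale span_base) simp
  ultimately show ?thesis
    using norm_diff_sgn_le[OF x(2), of y] xy
    by (intro bexI[of _ "sgn y"]) (auto simp: norm_sgn sgn_div_norm span_scale)
qed

lemma compact_common_convergent_subseq:
  fixes b :: "nat \<Rightarrow> nat \<Rightarrow> 'a::metric_space"
  assumes "compact S" "\<And>k j. j < i \<Longrightarrow> b k j \<in> S"
  obtains r c where "strict_mono r" "\<And>j. j < i \<Longrightarrow> (\<lambda>k. b (r k) j) \<longlonglongrightarrow> c j"
proof -
  have "\<exists>r c. strict_mono r \<and> (\<forall>j<i. (\<lambda>k. b (r k) j) \<longlonglongrightarrow> c j)"
    using assms(2)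
  proof (induction i)
    case 0
    show ?case by (intro exI[of _ id]) (auto simp: strict_mono_def)
  next
    case (Suc i)
    then obtain r c where r: "strict_mono r" and c: "\<forall>j<i. (\<lambda>k. b (r k) j) \<longlonglongrightarrow> c j"
      using less_SucI by blast
    obtain l r' where r': "strict_mono r'" and l: "((\<lambda>k. b (r k) i) \<circ> r') \<longlonglongrightarrow> l"
      using seq_compactE[OF compact_imp_seq_compact[OF assms(1)], of "\<lambda>k. b (r k) i"] Suc.prems
      by blast
    have "(\<lambda>k. b ((r \<circ> r') k) j) \<longlonglongrightarrow> (c(i := l)) j" if "j < Suc i" for j
      using l LIMSEQ_subseq_LIMSEQ[OF c[rule_format] r', of j] that
      by (cases "j = i") (auto simp: o_def)
    then show ?case
      using strict_mono_o[OF r r'] by blast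
  qed
  then show thesis
    using that by blast
qed

lemma nbhd_mono: "\<eta> \<le> \<eta>' \<Longrightarrow> \<omega> \<subseteq> \<omega>' \<Longrightarrow> nbhd \<eta> \<omega> \<subseteq> nbhd \<eta>' \<omega>'"
  unfolding nbhd_def by (blast intro: less_le_trans)

lemma nbhd_nbhd_subset: "nbhd \<eta> (nbhd \<eta>' \<omega>) \<subseteq> nbhd (\<eta> + \<eta>') \<omega>"
proof
  fix x assume "x \<in> nbhd \<eta> (nbhd \<eta>' \<omega>)"
  then obtain y u where "x \<in> sphere 0 1" "norm (x - y) < \<eta>" "u \<in> \<omega>" "norm (y - u) < \<eta>'"
    unfolding nbhd_def by blast
  then show "x \<in> nbhd (\<eta> + \<eta>') \<omega>"
    unfolding nbhd_def using norm_triangle_lt[of "x - y" "y - u"] by force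
qed

lemma orthonormal_frame_limit:
  fixes b :: "nat \<Rightarrow> nat \<Rightarrow> 'a::real_inner"
  assumes "\<And>k. orthonormal_frame i (b k)" and "\<And>j. j < i \<Longrightarrow> (\<lambda>k. b k j) \<longlonglongrightarrow> c j"
  shows "orthonormal_frame i c"
  unfolding orthonormal_frame_def
proof (intro allI impI)
  fix j l assume "j < i" "l < i"
  then have "(\<lambda>k. b k j \<bullet> b k l) \<longlonglongrightarrow> c j \<bullet> c l"
    by (intro tendsto_inner assms(2))
  moreover have "(\<lambda>k. b k j \<bullet> b k l) = (\<lambda>k. of_bool (j = l))"
    using assms(1) \<open>j < i\<close> \<open>l < i\<close> by (simp add: orthonormal_frame_def)
  ultimately show "c j \<bullet> c l = of_bool (j = l)"
    by (metis LIMSEQ_unique tendsto_const)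
qed

lemma subspaces_convergent_subseq:
  fixes X :: "nat \<Rightarrow> 'a::euclidean_space set"
  assumes X: "\<And>k. subspace (X k)" "\<And>k. dim (X k) = i"
  obtains \<xi> r where "subspace \<xi>" "dim \<xi> = i" "strict_mono r"
    "\<And>\<eta>. 0 < \<eta> \<Longrightarrow> \<forall>\<^sub>F k in sequentially. X (r k) \<inter> sphere 0 1 \<subseteq> nbhd \<eta> (\<xi> \<inter> sphere 0 1)"
proof -
  have "\<exists>f. orthonormal_frame i f \<and> X k = span (f ` {..<i})" for k
    by (rule orthonormal_frame_exists[OF X]) blast
  then obtain b where b: "\<And>k. orthonormal_frame i (b k)" "\<And>k. X k = span (b k ` {..<i})"
    by metis
  obtain r c where r: "strict_mono r" and c: "\<And>j. j < i \<Longrightarrow> (\<lambda>k. b (r k) j) \<longlonglongrightarrow> c j"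
  proof (rule compact_common_convergent_subseq[OF compact_sphere, where b = b and i = i])
    show "b k j \<in> sphere 0 1" if "j < i" for k j
      using orthonormal_frame_norm[OF b(1) that] by simp
  qed blast
  have c_frame: "orthonormal_frame i c"
    by (rule orthonormal_frame_limit[OF b(1) c])
  define \<epsilon> where "\<epsilon> k = (\<Sum>j<i. norm (b (r k) j - c j))" for k
  have "\<epsilon> \<longlonglongrightarrow> 0"
    unfolding \<epsilon>_def
    by (intro tendsto_null_sum) (simp add: tendsto_norm_zero_iff LIM_zero_iff c)
  show thesis
  proof
    show "dim (span (c ` {..<i})) = i"
      by (rule dim_span_orthonormal_frame[OF c_frame])
    fix \<eta> :: real assume "0 < \<eta>"
    with \<open>\<epsilon> \<longlonglongrightarrow> 0\<close> have "\<forall>\<^sub>F k in sequentially. \<epsilon> k < min (\<eta> / 2) 1"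
      by (intro order_tendstoD(2)) auto
    then show "\<forall>\<^sub>F k in sequentially. X (r k) \<inter> sphere 0 1 \<subseteq> nbhd \<eta> (span (c ` {..<i}) \<inter> sphere 0 1)"
    proof (rule eventually_mono)
      fix k assume small: "\<epsilon> k < min (\<eta> / 2) 1"
      show "X (r k) \<inter> sphere 0 1 \<subseteq> nbhd \<eta> (span (c ` {..<i}) \<inter> sphere 0 1)"
      proof
        fix x assume x: "x \<in> X (r k) \<inter> sphere 0 1"
        then obtain w where "w \<in> span (c ` {..<i}) \<inter> sphere 0 1" "norm (x - w) \<le> 2 * \<epsilon> k"
          using orthonormal_frame_perturb[OF b(1), of x "r k" c] small
          unfolding \<epsilon>_def b(2) by auto
        then show "x \<in> nbhd \<eta> (span (c ` {..<i}) \<inter> sphere 0 1)"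
          unfolding nbhd_def using small x by force
      qed
    qed
  qed (simp_all add: r)
qed

section \<open>Partitions of the sphere into small pieces\<close>

lemma card_le_card_cover_small_diameter:
  fixes p :: "'b \<Rightarrow> 'a::metric_space"
  assumes "finite I" and cover: "p ` J \<subseteq> (\<Union>i\<in>I. U i)"
    and small: "\<And>i. i \<in> I \<Longrightarrow> bounded (U i) \<and> diameter (U i) < \<delta>"
    and sep: "\<And>j j'. j \<in> J \<Longrightarrow> j' \<in> J \<Longrightarrow> j \<noteq> j' \<Longrightarrow> \<delta> \<le> dist (p j) (p j')"
  shows "card J \<le> card I"
proof -
  have "\<forall>j\<in>J. \<exists>i\<in>I. p j \<in> U i"
    using cover by blast
  then obtain g where g: "\<And>j. j \<in> J \<Longrightarrow> g j \<in> I \<and> p j \<in> U (g j)"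
    by metis
  have "inj_on g J"
  proof (rule inj_onI, rule ccontr)
    fix j j' assume j: "j \<in> J" "j' \<in> J" "g j = g j'" "j \<noteq> j'"
    then have "dist (p j) (p j') \<le> diameter (U (g j))"
      using g[OF j(1)] g[OF j(2)] small j(3) by (intro diameter_bounded_bound) auto
    then show False
      using small[of "g j"] g[OF j(1)] sep[OF j(1,2,4)] by linarith
  qed
  then show ?thesis
    using card_inj_on_le[OF _ _ \<open>finite I\<close>] g by blast
qed

lemma sphere_separated_points:
  assumes "2 \<le> DIM('a)" "0 < m"
  obtains p :: "nat \<Rightarrow> 'a::euclidean_space"
  where "p ` {..m} \<subseteq> sphere 0 1" "\<And>j j'. j \<noteq> j' \<Longrightarrow> 1 / real m \<le> dist (p j) (p j')"
proof -
  obtain B :: "'a set" where "B \<subseteq> Basis" "card B = 2"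
    using obtain_subset_with_card_n[OF assms(1)] by blast
  then obtain e1 e2 :: 'a where e: "e1 \<in> Basis" "e2 \<in> Basis" "e1 \<noteq> e2"
    by (auto simp: card_2_iff)
  then have e_inner: "e1 \<bullet> e1 = 1" "e2 \<bullet> e2 = 1" "e1 \<bullet> e2 = 0" "e2 \<bullet> e1 = 0"
    by (auto simp: inner_Basis)
  define t where "t j = real j / real m" for j
  define p where "p j = t j *\<^sub>R e1 + sqrt (1 - (t j)\<^sup>2) *\<^sub>R e2" for j
  show thesis
  proof
    show "p ` {..m} \<subseteq> sphere 0 1"
    proof (intro image_subsetI)
      fix j assume "j \<in> {..m}"
      then have "0 \<le> t j" "t j \<le> 1"
        using assms(2) by (auto simp: t_def)
      then have "p j \<bullet> p j = 1"
        unfolding p_def by (simp add: inner_add_left inner_add_right e_inner power_le_one flip: power2_eq_square)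
      then show "p j \<in> sphere 0 1"
        by (simp add: norm_eq_1)
    qed
    fix j j' :: nat assume "j \<noteq> j'"
    have "1 / real m \<le> \<bar>real j - real j'\<bar> / real m"
      using \<open>j \<noteq> j'\<close> assms(2) by (intro divide_right_mono) auto
    also have "\<dots> = \<bar>(p j - p j') \<bullet> e1\<bar>"
      using assms(2)
      by (simp add: p_def t_def inner_diff_left inner_add_left e_inner abs_divide flip: diff_divide_distrib)
    also have "\<dots> \<le> dist (p j) (p j')"
      using Basis_le_norm[OF e(1)] by (simp add: dist_norm)
    finally show "1 / real m \<le> dist (p j) (p j')" .
  qed
qed

lemma admissible_partition_card_gt:
  fixes U :: "nat \<Rightarrow> 'a::euclidean_space set"
  assumes "2 \<le> DIM('a)" "0 < m" and adm: "admissible_partition \<mu> m N U v"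
  shows "m < N"
proof -
  obtain p :: "nat \<Rightarrow> 'a" where p: "p ` {..m} \<subseteq> sphere 0 1"
    "\<And>j j'. j \<noteq> j' \<Longrightarrow> 1 / real m \<le> dist (p j) (p j')"
    using sphere_separated_points[OF assms(1,2)] by blast
  have "card {..m} \<le> card {1..N}"
  proof (rule card_le_card_cover_small_diameter[where p = p and \<delta> = "1 / real m"])
    show "p ` {..m} \<subseteq> (\<Union>i\<in>{1..N}. U i)"
      using p(1) adm by (simp add: admissible_partition_def)
    show "bounded (U i) \<and> diameter (U i) < 1 / real m" if "i \<in> {1..N}" for i
    proof -
      have "U i \<subseteq> sphere 0 1 \<and> diameter (U i) < 1 / real m"
        using adm that unfolding admissible_partition_def by blast
      then show ?thesis
        using bounded_subset[OF bounded_sphere] by blast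
    qed
  qed (use p(2) in auto)
  then show ?thesis
    by simp
qed

lemma admissible_partition_pos:
  fixes U :: "nat \<Rightarrow> 'a::euclidean_space set"
  assumes "admissible_partition \<mu> m N U v"
  shows "0 < N"
proof (rule ccontr)
  assume "\<not> 0 < N"
  then have "sphere (0::'a) 1 = {}"
    using assms by (simp add: admissible_partition_def)
  then show False
    by simp
qed

lemma admissible_partition_subset_nbhd:
  assumes "admissible_partition \<mu> m N U v" "i \<in> {1..N}"
  shows "U i \<subseteq> nbhd (1 / real m) {v i}"
proof
  fix x assume "x \<in> U i"
  moreover have "U i \<subseteq> sphere 0 1" "diameter (U i) < 1 / real m" "v i \<in> U i"
    using assms by (auto simp: admissible_partition_def)
  moreover have "dist x (v i) \<le> diameter (U i)"
    using calculation bounded_subset[OF bounded_sphere]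
    by (intro diameter_bounded_bound) auto
  ultimately show "x \<in> nbhd (1 / real m) {v i}"
    by (auto simp: nbhd_def dist_norm)
qed

section \<open>Finite measures on the sphere\<close>

locale sphere_measure = finite_measure \<mu> for \<mu> :: "'a::euclidean_space measure" +
  assumes sets_eq_sphere: "sets \<mu> = sets (restrict_space borel (sphere 0 1))"
begin

lemma space_eq_sphere: "space \<mu> = sphere 0 1"
  using sets_eq_imp_space_eq[OF sets_eq_sphere] by (simp add: space_restrict_space)

lemma borel_subset_sphere_in_sets: "B \<in> sets borel \<Longrightarrow> B \<subseteq> sphere 0 1 \<Longrightarrow> B \<in> sets \<mu>"
  unfolding sets_eq_sphere by (subst sets_restrict_space_iff) auto

lemma nbhd_in_sets: "nbhd \<eta> \<omega> \<in> sets \<mu>"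
proof (rule borel_subset_sphere_in_sets)
  have eq: "nbhd \<eta> \<omega> = sphere 0 1 \<inter> (\<Union>u\<in>\<omega>. ball u \<eta>)"
    unfolding nbhd_def by (auto simp: dist_norm norm_minus_commute)
  show "nbhd \<eta> \<omega> \<in> sets borel"
    unfolding eq by (intro sets.Int borel_closed borel_open open_UN open_ball) auto
  show "nbhd \<eta> \<omega> \<subseteq> sphere 0 1"
    unfolding nbhd_def by auto
qed

lemma measure_nbhd_tendsto:
  assumes "closed \<omega>" "\<omega> \<subseteq> sphere 0 1"
  shows "(\<lambda>p. measure \<mu> (nbhd (inverse (Suc p)) \<omega>)) \<longlonglongrightarrow> measure \<mu> \<omega>"
proof -
  have "(\<Inter>p. nbhd (inverse (Suc p)) \<omega>) = \<omega>"
  proof (intro equalityI subsetI)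
    fix x assume x: "x \<in> (\<Inter>p. nbhd (inverse (Suc p)) \<omega>)"
    have "\<exists>u\<in>\<omega>. dist u x < e" if e: "0 < e" for e
    proof -
      obtain p where p: "inverse (real (Suc p)) < e"
        using reals_Archimedean[OF e] by blast
      from x obtain u where "u \<in> \<omega>" "norm (x - u) < inverse (real (Suc p))"
        unfolding nbhd_def by blast
      with p show ?thesis
        by (metis dist_commute dist_norm order.strict_trans)
    qed
    then show "x \<in> \<omega>"
      using closed_approachable[OF assms(1)] by blast
  next
    fix x assume "x \<in> \<omega>"
    then show "x \<in> (\<Inter>p. nbhd (inverse (Suc p)) \<omega>)"
      using assms(2) unfolding nbhd_def by force
  qed
  moreover have "decseq (\<lambda>p. nbhd (inverse (Suc p)) \<omega>)"
    unfolding decseq_def by (intro allI impI nbhd_mono) auto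
  ultimately show ?thesis
    using finite_Lim_measure_decseq[of "\<lambda>p. nbhd (inverse (Suc p)) \<omega>"] nbhd_in_sets by auto
qed

lemma subspace_limit_measure_ge:
  assumes X: "\<And>k. subspace (X k)" "\<And>k. dim (X k) = i"
    and heavy: "\<And>k. L - inverse (Suc k) < measure \<mu> (nbhd (inverse (Suc k)) (X k \<inter> sphere 0 1))"
  obtains \<xi> where "subspace \<xi>" "dim \<xi> = i" "L \<le> measure \<mu> (\<xi> \<inter> sphere 0 1)"
proof -
  obtain \<xi> r where \<xi>: "subspace \<xi>" "dim \<xi> = i" and r: "strict_mono r"
    and conv: "\<And>\<eta>. 0 < \<eta> \<Longrightarrow> \<forall>\<^sub>F k in sequentially. X (r k) \<inter> sphere 0 1 \<subseteq> nbhd \<eta> (\<xi> \<inter> sphere 0 1)"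
    by (rule subspaces_convergent_subseq[where X = X, OF X(1,2)]) blast
  have inv_r: "(\<lambda>k. inverse (real (Suc (r k)))) \<longlonglongrightarrow> 0"
    using LIMSEQ_subseq_LIMSEQ[OF LIMSEQ_inverse_real_of_nat r] by (simp add: o_def)
  have "L \<le> measure \<mu> (nbhd \<eta> (\<xi> \<inter> sphere 0 1))" if "0 < \<eta>" for \<eta>
  proof (rule tendsto_le[OF trivial_limit_sequentially tendsto_const])
    show "(\<lambda>k. L - inverse (Suc (r k))) \<longlonglongrightarrow> L"
      using tendsto_diff[OF tendsto_const inv_r] by simp
    have "\<forall>\<^sub>F k in sequentially. inverse (Suc (r k)) < \<eta> / 2"
      using that by (intro order_tendstoD(2)[OF inv_r]) simp
    moreover have "\<forall>\<^sub>F k in sequentially. X (r k) \<inter> sphere 0 1 \<subseteq> nbhd (\<eta> / 2) (\<xi> \<inter> sphere 0 1)"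
      using conv that by simp
    ultimately show "\<forall>\<^sub>F k in sequentially. L - inverse (Suc (r k)) \<le> measure \<mu> (nbhd \<eta> (\<xi> \<inter> sphere 0 1))"
    proof eventually_elim
      case (elim k)
      have "nbhd (inverse (Suc (r k))) (X (r k) \<inter> sphere 0 1)
            \<subseteq> nbhd (inverse (Suc (r k))) (nbhd (\<eta> / 2) (\<xi> \<inter> sphere 0 1))"
        using elim(2) by (intro nbhd_mono) auto
      also have "\<dots> \<subseteq> nbhd (inverse (Suc (r k)) + \<eta> / 2) (\<xi> \<inter> sphere 0 1)"
        by (rule nbhd_nbhd_subset)
      also have "\<dots> \<subseteq> nbhd \<eta> (\<xi> \<inter> sphere 0 1)"
        using elim(1) by (intro nbhd_mono) auto
      finally have "measure \<mu> (nbhd (inverse (Suc (r k))) (X (r k) \<inter> sphere 0 1))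
                      \<le> measure \<mu> (nbhd \<eta> (\<xi> \<inter> sphere 0 1))"
        by (rule finite_measure_mono[OF _ nbhd_in_sets])
      then show ?case
        using heavy[of "r k"] by linarith
    qed
  qed
  moreover have "closed (\<xi> \<inter> sphere 0 1)"
    by (intro closed_Int closed_subspace[OF \<xi>(1)] closed_sphere)
  ultimately have "L \<le> measure \<mu> (\<xi> \<inter> sphere 0 1)"
    by (intro LIMSEQ_le_const[OF measure_nbhd_tendsto]) auto
  with \<xi> that show thesis
    by blast
qed

lemma measure_nbhd_subspaces_uniform:
  assumes lt: "\<And>\<xi>. subspace \<xi> \<Longrightarrow> dim \<xi> = i \<Longrightarrow> measure \<mu> (\<xi> \<inter> sphere 0 1) < L"
  shows "\<exists>c<L. \<forall>\<^sub>F \<eta> in at_right 0. \<forall>\<xi>. subspace \<xi> \<and> dim \<xi> = i \<longrightarrow>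
           measure \<mu> (nbhd \<eta> (\<xi> \<inter> sphere 0 1)) \<le> c"
proof -
  have "\<exists>\<eta>>0. \<exists>c<L. \<forall>\<xi>. subspace \<xi> \<and> dim \<xi> = i \<longrightarrow> measure \<mu> (nbhd \<eta> (\<xi> \<inter> sphere 0 1)) \<le> c"
  proof (rule ccontr)
    assume neg: "\<not> ?thesis"
    have "\<exists>\<xi>. subspace \<xi> \<and> dim \<xi> = i \<and>
        L - inverse (Suc k) < measure \<mu> (nbhd (inverse (Suc k)) (\<xi> \<inter> sphere 0 1))" for k :: nat
      using neg by (simp add: not_le)
    then obtain X where X: "\<And>k. subspace (X k)" "\<And>k. dim (X k) = i"
        "\<And>k. L - inverse (Suc k) < measure \<mu> (nbhd (inverse (Suc k)) (X k \<inter> sphere 0 1))"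
      by metis
    obtain \<xi> where "subspace \<xi>" "dim \<xi> = i" "L \<le> measure \<mu> (\<xi> \<inter> sphere 0 1)"
      using subspace_limit_measure_ge[where X = X, OF X] by blast
    with lt show False
      by fastforce
  qed
  then obtain \<eta> c where "0 < \<eta>" "c < L"
    and c: "\<And>\<xi>. subspace \<xi> \<Longrightarrow> dim \<xi> = i \<Longrightarrow> measure \<mu> (nbhd \<eta> (\<xi> \<inter> sphere 0 1)) \<le> c"
    by blast
  have "measure \<mu> (nbhd \<eta>' (\<xi> \<inter> sphere 0 1)) \<le> c"
    if "\<eta>' < \<eta>" "subspace \<xi>" "dim \<xi> = i" for \<eta>' \<xi>
  proof -
    have "nbhd \<eta>' (\<xi> \<inter> sphere 0 1) \<subseteq> nbhd \<eta> (\<xi> \<inter> sphere 0 1)"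
      using that(1) by (intro nbhd_mono) auto
    then show ?thesis
      using c[OF that(2,3)] finite_measure_mono[OF _ nbhd_in_sets] by (meson order_trans)
  qed
  then show ?thesis
    unfolding eventually_at_right_field using \<open>0 < \<eta>\<close> \<open>c < L\<close> by blast
qed

lemma measure_UN_admissible_partition:
  assumes adm: "admissible_partition \<mu> m N U v" and "J \<subseteq> {1..N}"
  shows "measure \<mu> (\<Union>i\<in>J. U i) = (\<Sum>i\<in>J. measure \<mu> (U i))"
proof (rule finite_measure_finite_Union)
  show "finite J"
    using assms(2) finite_subset by blast
  show "U ` J \<subseteq> sets \<mu>"
    using adm assms(2) by (auto simp: admissible_partition_def intro!: borel_subset_sphere_in_sets)
  have "\<forall>i\<in>{1..N}. \<forall>j\<in>{1..N}. i \<noteq> j \<longrightarrow> U i \<inter> U j = {}"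
    using adm by (simp add: admissible_partition_def)
  then show "disjoint_family_on U J"
    using assms(2) unfolding disjoint_family_on_def by blast
qed

lemma mu_m_mass_admissible_partition:
  assumes adm: "admissible_partition \<mu> m N U v"
  shows "mu_m_mass \<mu> N U = measure \<mu> (space \<mu>) + 1 / real N"
proof -
  have "(\<Sum>i\<in>{1..N}. measure \<mu> (U i)) = measure \<mu> (space \<mu>)"
    using measure_UN_admissible_partition[OF adm, of "{1..N}"] adm
    by (simp add: admissible_partition_def space_eq_sphere)
  moreover have "real N * (1 / (real N)\<^sup>2) = 1 / real N"
    using admissible_partition_pos[OF adm] by (simp add: power2_eq_square)
  ultimately show ?thesis
    by (simp add: mu_m_mass_def sum.distrib)
qed

lemma mubar_m_nbhd_le:
  assumes adm: "admissible_partition \<mu> m N U v"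
  shows "mubar_m \<mu> N U v (nbhd \<eta> \<omega>) \<le> measure \<mu> (nbhd (1 / real m + \<eta>) \<omega>) + 1 / real N"
proof -
  define J where "J = {i \<in> {1..N}. v i \<in> nbhd \<eta> \<omega>}"
  have J: "J \<subseteq> {1..N}"
    by (auto simp: J_def)
  have "U i \<subseteq> nbhd (1 / real m) (nbhd \<eta> \<omega>)" if "i \<in> J" for i
  proof -
    from that have "i \<in> {1..N}" "{v i} \<subseteq> nbhd \<eta> \<omega>"
      by (auto simp: J_def)
    then show ?thesis
      by (intro order_trans[OF admissible_partition_subset_nbhd[OF adm] nbhd_mono]) auto
  qed
  then have "(\<Union>i\<in>J. U i) \<subseteq> nbhd (1 / real m) (nbhd \<eta> \<omega>)"
    by blast
  also have "\<dots> \<subseteq> nbhd (1 / real m + \<eta>) \<omega>"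
    by (rule nbhd_nbhd_subset)
  finally have "measure \<mu> (\<Union>i\<in>J. U i) \<le> measure \<mu> (nbhd (1 / real m + \<eta>) \<omega>)"
    by (rule finite_measure_mono[OF _ nbhd_in_sets])
  then have "(\<Sum>i\<in>J. measure \<mu> (U i)) \<le> measure \<mu> (nbhd (1 / real m + \<eta>) \<omega>)"
    using measure_UN_admissible_partition[OF adm J] by simp
  moreover have "real (card J) * (1 / (real N)\<^sup>2) \<le> 1 / real N"
    using card_mono[OF _ J] admissible_partition_pos[OF adm]
    by (simp add: power2_eq_square divide_simps)
  ultimately have mu_m_le: "mu_m \<mu> N U v (nbhd \<eta> \<omega>) \<le> measure \<mu> (nbhd (1 / real m + \<eta>) \<omega>) + 1 / real N"
    unfolding mu_m_def J_def by (simp add: sum.inter_filter[symmetric] sum.distrib)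
  have "measure \<mu> (space \<mu>) / mu_m_mass \<mu> N U \<le> 1"
    using mu_m_mass_admissible_partition[OF adm] admissible_partition_pos[OF adm]
    by (simp add: divide_le_eq_1 add_nonneg_pos)
  moreover have "0 \<le> mu_m \<mu> N U v (nbhd \<eta> \<omega>)"
    by (auto simp: mu_m_def intro!: sum_nonneg)
  ultimately have "mubar_m \<mu> N U v (nbhd \<eta> \<omega>) \<le> mu_m \<mu> N U v (nbhd \<eta> \<omega>)"
    unfolding mubar_m_def using mult_right_mono by fastforce
  with mu_m_le show ?thesis
    by linarith
qed

lemma eventually_mubar_m_nbhd_less:
  assumes "2 \<le> DIM('a)" and part: "\<And>m. 0 < m \<Longrightarrow> admissible_partition \<mu> m (N m) (U m) (v m)"
    and "0 < \<eta>" and bound: "\<And>\<omega>. \<omega> \<in> \<Omega> \<Longrightarrow> measure \<mu> (nbhd (2 * \<eta>) \<omega>) \<le> c" and "c < t"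
  shows "\<forall>\<^sub>F m in sequentially. \<forall>\<omega>\<in>\<Omega>. mubar_m \<mu> (N m) (U m) (v m) (nbhd \<eta> \<omega>) < t"
proof -
  have "\<forall>\<^sub>F m in sequentially. 1 / real m < min \<eta> (t - c)"
    using assms(3,5) by (intro order_tendstoD(2)[OF lim_inverse_n']) simp
  with eventually_gt_at_top[of 0]
  show ?thesis
  proof eventually_elim
    case (elim m)
    then have adm: "admissible_partition \<mu> m (N m) (U m) (v m)"
      by (intro part) simp
    have "1 / real (N m) \<le> 1 / real m"
      using admissible_partition_card_gt[OF assms(1) _ adm] elim by (simp add: frac_le)
    show ?case
    proof
      fix \<omega> assume "\<omega> \<in> \<Omega>"
      have "nbhd (1 / real m + \<eta>) \<omega> \<subseteq> nbhd (2 * \<eta>) \<omega>"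
        using elim by (intro nbhd_mono) auto
      then have "measure \<mu> (nbhd (1 / real m + \<eta>) \<omega>) \<le> measure \<mu> (nbhd (2 * \<eta>) \<omega>)"
        by (rule finite_measure_mono[OF _ nbhd_in_sets])
      then show "mubar_m \<mu> (N m) (U m) (v m) (nbhd \<eta> \<omega>) < t"
        using mubar_m_nbhd_le[OF adm, of \<eta> \<omega>] bound[OF \<open>\<omega> \<in> \<Omega>\<close>]
          \<open>1 / real (N m) \<le> 1 / real m\<close> elim by linarith
    qed
  qed
qed

lemma measure_nbhd_subspaces_uniform_finite:
  assumes "finite I"
    and lt: "\<And>i \<xi>. i \<in> I \<Longrightarrow> subspace \<xi> \<Longrightarrow> dim \<xi> = i \<Longrightarrow> measure \<mu> (\<xi> \<inter> sphere 0 1) < L i"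
  shows "\<exists>b>0. \<exists>c. \<forall>i\<in>I. c i < L i \<and> (\<forall>\<eta> \<xi>. 0 < \<eta> \<and> \<eta> < b \<and> subspace \<xi> \<and> dim \<xi> = i \<longrightarrow>
           measure \<mu> (nbhd \<eta> (\<xi> \<inter> sphere 0 1)) \<le> c i)"
proof -
  have "\<forall>i\<in>I. \<exists>c<L i. \<forall>\<^sub>F \<eta> in at_right 0. \<forall>\<xi>. subspace \<xi> \<and> dim \<xi> = i \<longrightarrow>
          measure \<mu> (nbhd \<eta> (\<xi> \<inter> sphere 0 1)) \<le> c"
    using lt by (blast intro: measure_nbhd_subspaces_uniform)
  then obtain c where c: "\<forall>i\<in>I. c i < L i \<and> (\<forall>\<^sub>F \<eta> in at_right 0. \<forall>\<xi>. subspace \<xi> \<and> dim \<xi> = i \<longrightarrow>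
          measure \<mu> (nbhd \<eta> (\<xi> \<inter> sphere 0 1)) \<le> c i)"
    by (auto dest!: bchoice)
  then have "\<forall>\<^sub>F \<eta> in at_right 0. \<forall>i\<in>I. \<forall>\<xi>. subspace \<xi> \<and> dim \<xi> = i \<longrightarrow>
               measure \<mu> (nbhd \<eta> (\<xi> \<inter> sphere 0 1)) \<le> c i"
    using \<open>finite I\<close> by (intro eventually_ball_finite) auto
  with c show ?thesis
    unfolding eventually_at_right_field by (metis greaterThan_iff)
qed

lemma eventually_mubar_m_subspaces_less:
  assumes I: "I \<subseteq> {1..DIM('a) - 1}"
    and part: "\<And>m. 0 < m \<Longrightarrow> admissible_partition \<mu> m (N m) (U m) (v m)"
    and L: "\<And>i. i \<in> I \<Longrightarrow> 0 < L i"
    and lt: "\<And>i \<xi>. i \<in> I \<Longrightarrow> subspace \<xi> \<Longrightarrow> dim \<xi> = i \<Longrightarrow> measure \<mu> (\<xi> \<inter> sphere 0 1) < L i"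
  obtains t \<eta>0 where "0 < \<eta>0" "\<eta>0 < 1" "\<And>i. i \<in> I \<Longrightarrow> 0 < t i \<and> t i < L i"
    "\<forall>\<^sub>F m in sequentially. \<forall>i\<in>I. \<forall>\<xi>. subspace \<xi> \<and> dim \<xi> = i \<longrightarrow>
       mubar_m \<mu> (N m) (U m) (v m) (nbhd \<eta>0 (\<xi> \<inter> sphere 0 1)) < t i"
proof -
  have "finite I"
    using I finite_subset by blast
  then have "\<exists>b>0. \<exists>c. \<forall>i\<in>I. c i < L i \<and> (\<forall>\<eta> \<xi>. 0 < \<eta> \<and> \<eta> < b \<and> subspace \<xi> \<and> dim \<xi> = i \<longrightarrow>
      measure \<mu> (nbhd \<eta> (\<xi> \<inter> sphere 0 1)) \<le> c i)"
    using lt by (rule measure_nbhd_subspaces_uniform_finite)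
  then obtain b c where "0 < b" and bc: "\<forall>i\<in>I. c i < L i \<and> (\<forall>\<eta> \<xi>. 0 < \<eta> \<and> \<eta> < b \<and>
      subspace \<xi> \<and> dim \<xi> = i \<longrightarrow> measure \<mu> (nbhd \<eta> (\<xi> \<inter> sphere 0 1)) \<le> c i)"
    by blast
  define \<eta>0 where "\<eta>0 = min b 1 / 4"
  define t where "t i = (max (c i) 0 + L i) / 2" for i
  have \<eta>0: "0 < \<eta>0" "\<eta>0 < 1" "2 * \<eta>0 < b"
    using \<open>0 < b\<close> by (auto simp: \<eta>0_def)
  have t: "0 < t i" "t i < L i" "c i < t i" if "i \<in> I" for i
  proof -
    have "c i < L i"
      using bc that by blast
    then show "0 < t i" "t i < L i" "c i < t i"
      using L[OF that] by (auto simp: t_def)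
  qed
  have "\<forall>\<^sub>F m in sequentially. \<forall>i\<in>I. \<forall>\<xi>. subspace \<xi> \<and> dim \<xi> = i \<longrightarrow>
          mubar_m \<mu> (N m) (U m) (v m) (nbhd \<eta>0 (\<xi> \<inter> sphere 0 1)) < t i"
  proof (intro eventually_ball_finite[OF \<open>finite I\<close>] ballI)
    fix i assume i: "i \<in> I"
    let ?\<Omega> = "(\<lambda>\<xi>. \<xi> \<inter> sphere 0 1) ` {\<xi>. subspace \<xi> \<and> dim \<xi> = i}"
    have dim: "2 \<le> DIM('a)"
      using subsetD[OF I i] by auto
    have "0 < 2 * \<eta>0"
      using \<eta>0(1) by simp
    then have bound: "measure \<mu> (nbhd (2 * \<eta>0) \<omega>) \<le> c i" if "\<omega> \<in> ?\<Omega>" for \<omega>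
      using that bspec[OF bc i] \<eta>0(3) by blast
    have "\<forall>\<^sub>F m in sequentially. \<forall>\<omega>\<in>?\<Omega>. mubar_m \<mu> (N m) (U m) (v m) (nbhd \<eta>0 \<omega>) < t i"
      using dim part \<eta>0(1) bound t(3)[OF i] by (rule eventually_mubar_m_nbhd_less)
    then show "\<forall>\<^sub>F m in sequentially. \<forall>\<xi>. subspace \<xi> \<and> dim \<xi> = i \<longrightarrow>
                 mubar_m \<mu> (N m) (U m) (v m) (nbhd \<eta>0 (\<xi> \<inter> sphere 0 1)) < t i"
      by simp
  qed
  with that \<eta>0(1,2) t(1,2) show thesis
    by blast
qed

end

lemma lam_pos:
  assumes "1 \<le> i" "1 < q"
  shows "0 < lam n q i"
  using assms by (simp add: lam_def add_pos_pos)

theorem lemma5p10: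
  fixes \<mu> :: "'a::euclidean_space measure"
    and q :: real
    and N :: "nat \<Rightarrow> nat"
    and U :: "nat \<Rightarrow> nat \<Rightarrow> 'a set"
    and v :: "nat \<Rightarrow> nat \<Rightarrow> 'a"
  assumes q: "1 < q" "q < real DIM('a) + 1"
    and fin: "finite_measure \<mu>"
    and sets_mu: "sets \<mu> = sets (restrict_space borel (sphere (0::'a) 1))"
    and subsp: "\<And>i \<xi>. i \<in> {1..DIM('a) - 1} \<Longrightarrow> subspace \<xi> \<Longrightarrow> dim \<xi> = i \<Longrightarrow>
                  measure \<mu> (\<xi> \<inter> sphere 0 1) / measure \<mu> (space \<mu>) < lam DIM('a) q i"
    and part: "\<And>m. m \<ge> 1 \<Longrightarrow> admissible_partition \<mu> m (N m) (\<lambda>i. U i m) (\<lambda>i. v i m)"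
  shows "\<exists>lt :: nat \<Rightarrow> real.
           (\<forall>i\<in>{1..DIM('a) - 1}. 0 < lt i \<and> lt i < lam DIM('a) q i) \<and>
           (\<exists>N0 :: real. N0 > 0 \<and> (\<exists>\<eta>0 :: real. 0 < \<eta>0 \<and> \<eta>0 < 1 \<and>
              (\<forall>m :: nat. real m > N0 \<longrightarrow>
                 (\<forall>i\<in>{1..DIM('a) - 1}. \<forall>\<xi>. subspace \<xi> \<and> dim \<xi> = i \<longrightarrow>
                    mubar_m \<mu> (N m) (\<lambda>j. U j m) (\<lambda>j. v j m) (nbhd \<eta>0 (\<xi> \<inter> sphere 0 1))
                      / measure \<mu> (space \<mu>) < lt i))))"
proof -
  interpret sphere_measure \<mu>
    by (intro sphere_measure.intro sphere_measure_axioms.intro fin sets_mu)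
  let ?I = "{1..DIM('a) - 1}" and ?M = "measure \<mu> (space \<mu>)" and ?lam = "lam DIM('a) q"
  have lam: "0 < ?lam i" if "i \<in> ?I" for i
    using lam_pos q(1) that by simp
  show ?thesis
  proof (cases "?M = 0")
    case True
    \<comment> \<open>then every ratio is \<open>x / 0 = 0\<close>\<close>
    with lam show ?thesis
      by (intro exI[of _ "\<lambda>i. ?lam i / 2"] conjI exI[of _ 1] exI[of _ "1 / 2"]) auto
  next
    case False
    then have M: "0 < ?M"
      using measure_nonneg[of \<mu> "space \<mu>"] by linarith
    obtain t \<eta>0 where \<eta>0: "0 < \<eta>0" "\<eta>0 < 1" and t: "\<And>i. i \<in> ?I \<Longrightarrow> 0 < t i \<and> t i < ?lam i * ?M"
      and "\<forall>\<^sub>F m in sequentially. \<forall>i\<in>?I. \<forall>\<xi>. subspace \<xi> \<and> dim \<xi> = i \<longrightarrow>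
                 mubar_m \<mu> (N m) (\<lambda>j. U j m) (\<lambda>j. v j m) (nbhd \<eta>0 (\<xi> \<inter> sphere 0 1)) < t i"
    proof (rule eventually_mubar_m_subspaces_less[of ?I N "\<lambda>m j. U j m" "\<lambda>m j. v j m"])
      show "i \<in> ?I \<Longrightarrow> 0 < ?lam i * ?M" for i
        using lam M by simp
      show "i \<in> ?I \<Longrightarrow> subspace \<xi> \<Longrightarrow> dim \<xi> = i \<Longrightarrow> measure \<mu> (\<xi> \<inter> sphere 0 1) < ?lam i * ?M" for i \<xi>
        using subsp M by (simp add: pos_divide_less_eq)
    qed (use part in auto)
    then obtain m0 where "\<And>m. m0 \<le> m \<Longrightarrow> \<forall>i\<in>?I. \<forall>\<xi>. subspace \<xi> \<and> dim \<xi> = i \<longrightarrow>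
        mubar_m \<mu> (N m) (\<lambda>j. U j m) (\<lambda>j. v j m) (nbhd \<eta>0 (\<xi> \<inter> sphere 0 1)) < t i"
      unfolding eventually_sequentially by blast
    with t M \<eta>0 show ?thesis
      by (intro exI[of _ "\<lambda>i. t i / ?M"] conjI exI[of _ "real m0 + 1"] exI[of _ \<eta>0])
        (auto simp: divide_strict_right_mono pos_divide_less_eq)
  qed
qed

end
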